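(* Let $\lambda$ be a strict partition, $\mu$ any probability distribution on $J(P^{\mathrm{shift}}_\lambda)$, and $[i,j]\in P^{\mathrm{shift}}_\lambda$. Then \[\mathbb{E}(\mu;R^{\mathrm{shift}}_{ij})=1+\sum_{c\in C^{\mathrm{shift}}_{ij}(\lambda)}\mathbb{P}(\nu\sim\mu;\ c\in\nu).\]
   Context: Strict partitions, $P^{\mathrm{shift}}_\lambda$ (boxes $[i,j]$, $1\le i\le\ell(\lambda)$, $i\le j\le i+\lambda_i-1$, ordered componentwise), and toggle statistics $\mathcal{T}^\pm_p$ (with $\mathcal{T}^+_p(I)=1$ iff $p\notin I$ is minimal in the complement, $\mathcal{T}^-_p(I)=1$ iff $p\in I$ is maximal in $I$) are as usual. Order ideals of $P^{\mathrm{shift}}_\lambda$ are identified with strict partitions $\nu\subseteq\lambda$. The shifted rook is $R^{\mathrm{shift}}_{ij}:=\sum_{i'\le i,j'\le j}\mathcal{T}^+_{[i',j']}+\sum_{i'\ge i,j'\ge j}\mathcal{T}^-_{[i',j']}-\sum_{i'<i,j'<j,i'<j'}\mathcal{T}^-_{[i',j']}-\sum_{i'>i,j'>j,i'<j'}\mathcal{T}^+_{[i',j']}$ (sums over boxes of $P^{\mathrm{shift}}_\lambda$). Outward corners: $C^{\mathrm{shift}}(\lambda)$ is the set of indices $1\le t\le\ell(\lambda)-1$ with $\lambda_t-\lambda_{t+1}\ge2$; the corner $c=c_t$ occurs at lattice point $(t,\,t+\lambda_{t+1})$ (row coordinate, column coordinate; box $[i,j]$ has southeast corner at lattice point $(i,j)$);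 this is a north step followed by an east step on the southeast border of the shifted diagram. An order ideal $\nu$ contains $c_t$ (written $c_t\in\nu$) iff $\nu_{t+1}=\lambda_{t+1}$ and $\nu_t\ge\lambda_{t+1}+2$. $C^{\mathrm{shift}}_{ij}(\lambda)$ is the set of corners occurring at $(t,t+\lambda_{t+1})$ strictly southeast of the center of box $[i,j]$, i.e. with $t\ge i$ and $t+\lambda_{t+1}\ge j$. *)

theory Defs
  imports "HOL-Probability.Probability"
begin

type_synonym box = "nat \<times> nat"

text \<open>A strict partition is a list of positive, strictly decreasing parts.
  Rows are 1-indexed: part lambda_i is lampart lam i (0 outside 1..length).\<close>

definition strict_partition :: "nat list \<Rightarrow> bool" where
  "strict_partition lam \<longleftrightarrow> sorted_wrt (>) lam \<and> 0 \<notin> set lam"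

definition lampart :: "nat list \<Rightarrow> nat \<Rightarrow> nat" where
  "lampart lam i = (if 1 \<le> i \<and> i \<le> length lam then lam ! (i - 1) else 0)"

definition shift_poset :: "nat list \<Rightarrow> box set" where
  "shift_poset lam = {(i, j). 1 \<le> i \<and> i \<le> length lam \<and> i \<le> j \<and> j < i + lampart lam i}"

definition box_le :: "box \<Rightarrow> box \<Rightarrow> bool" where
  "box_le p q \<longleftrightarrow> fst p \<le> fst q \<and> snd p \<le> snd q"

definition order_ideals :: "nat list \<Rightarrow> box set set" where
  "order_ideals lam = {I. I \<subseteq> shift_poset lam \<and>
      (\<forall>p\<in>I. \<forall>q\<in>shift_poset lam. box_le q p \<longrightarrow> q \<in> I)}"

definition toggle_plus :: "nat list \<Rightarrow> box \<Rightarrow> box set \<Rightarrow> int" where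
  "toggle_plus lam p I = (if p \<in> shift_poset lam \<and> p \<notin> I \<and>
      (\<forall>q\<in>shift_poset lam - I. box_le q p \<longrightarrow> q = p) then 1 else 0)"

definition toggle_minus :: "nat list \<Rightarrow> box \<Rightarrow> box set \<Rightarrow> int" where
  "toggle_minus lam p I = (if p \<in> shift_poset lam \<and> p \<in> I \<and>
      (\<forall>q\<in>I. box_le p q \<longrightarrow> q = p) then 1 else 0)"

definition shift_rook :: "nat list \<Rightarrow> nat \<Rightarrow> nat \<Rightarrow> box set \<Rightarrow> int" where
  "shift_rook lam i j I =
     (\<Sum>p\<in>{p\<in>shift_poset lam. fst p \<le> i \<and> snd p \<le> j}. toggle_plus lam p I)
   + (\<Sum>p\<in>{p\<in>shift_poset lam. fst p \<ge> i \<and> snd p \<ge> j}. toggle_minus lam p I)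
   - (\<Sum>p\<in>{p\<in>shift_poset lam. fst p < i \<and> snd p < j \<and> fst p < snd p}. toggle_minus lam p I)
   - (\<Sum>p\<in>{p\<in>shift_poset lam. fst p > i \<and> snd p > j \<and> fst p < snd p}. toggle_plus lam p I)"

definition ideal_part :: "box set \<Rightarrow> nat \<Rightarrow> nat" where
  "ideal_part I t = card {j. (t, j) \<in> I}"

text \<open>Outward corners, indexed by t, occurring at lattice point (t, t + lambda_{t+1}).\<close>
definition shift_corners :: "nat list \<Rightarrow> nat set" where
  "shift_corners lam = {t. 1 \<le> t \<and> t \<le> length lam - 1 \<and> lampart lam t \<ge> lampart lam (t + 1) + 2}"

definition shift_corners_ij :: "nat list \<Rightarrow> nat \<Rightarrow> nat \<Rightarrow> nat set" where
  "shift_corners_ij lam i j = {t \<in> shift_corners lam. t \<ge> i \<and> t + lampart lam (t + 1) \<ge> j}"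

definition corner_in :: "nat list \<Rightarrow> nat \<Rightarrow> box set \<Rightarrow> bool" where
  "corner_in lam t I \<longleftrightarrow> ideal_part I (t + 1) = lampart lam (t + 1) \<and>
      ideal_part I t \<ge> lampart lam (t + 1) + 2"

end

theory Submission
  imports Defs
begin

(* Row t of \<nu> is the interval of
   columns t .. t + \<nu>_t - 1, so the only box of row t that can be toggled in is the one just past
   its end, and the only one that can be toggled out is its last box. Sorting the four sums of
   R_ij by rows, the rows t < i telescope to [(i,j) \<notin> \<nu>], and the rows t \<ge> i telescope to
   [(i,j) \<in> \<nu>] plus one for each corner c_t \<in> C_ij(\<lambda>) with c_t \<in> \<nu>. Hence
   R_ij(\<nu>) = 1 + #{c \<in> C_ij(\<lambda>). c \<in> \<nu>}, and taking expectations is linearity. *)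

lemma row_end_antimono:
  fixes L :: "nat \<Rightarrow> nat"
  assumes "t \<le> a" and "\<And>s. t \<le> s \<Longrightarrow> s < a \<Longrightarrow> L (Suc s) < L s"
  shows "a + L a \<le> t + L t"
  using assms(1)
proof (induction a rule: dec_induct)
  case (step s)
  have "L (Suc s) < L s" using assms(2) step.hyps by simp
  with step.IH show ?case by simp
qed simp

lemma eq_atLeastLessThan_card:
  fixes S :: "nat set"
  assumes "finite S" and "\<And>c. c \<in> S \<Longrightarrow> t \<le> c"
    and "\<And>c c'. c \<in> S \<Longrightarrow> t \<le> c' \<Longrightarrow> c' \<le> c \<Longrightarrow> c' \<in> S"
  shows "S = {t..<t + card S}"
proof (cases "S = {}")
  case False
  then have max: "Max S \<in> S" using assms(1) by simp
  have "S = {t..<Suc (Max S)}"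
  proof
    show "S \<subseteq> {t..<Suc (Max S)}" using assms(1,2) by (auto simp: less_Suc_eq_le)
    show "{t..<Suc (Max S)} \<subseteq> S" using assms(3)[OF max] by auto
  qed
  moreover have "t \<le> Max S" using assms(2)[OF max] .
  ultimately show ?thesis by (metis card_atLeastLessThan le_add_diff_inverse Suc_leI le_SucI)
qed simp

lemma sum_graph_indicator:
  fixes l :: nat
  assumes "finite S" and "S \<subseteq> {1..l} \<times> UNIV"
  shows "(\<Sum>p\<in>S. if snd p = e (fst p) \<and> Q (fst p) then 1 else 0 :: int)
       = (\<Sum>t\<in>{1..l}. if (t, e t) \<in> S \<and> Q t then 1 else 0)"
proof -
  have count: "(\<Sum>x\<in>A. if P x then 1 else 0 :: int) = int (card {x\<in>A. P x})"
    if "finite A" for A and P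
    using sum.inter_filter[OF that, of "\<lambda>_. 1::int" P] by simp
  have "{p\<in>S. snd p = e (fst p) \<and> Q (fst p)} = (\<lambda>t. (t, e t)) ` {t\<in>{1..l}. (t, e t) \<in> S \<and> Q t}"
    using assms(2) by force
  then have "card {p\<in>S. snd p = e (fst p) \<and> Q (fst p)} = card {t\<in>{1..l}. (t, e t) \<in> S \<and> Q t}"
    by (simp add: card_image inj_on_def)
  then show ?thesis using assms(1) by (subst (1 2) count) simp_all
qed

lemma sum_if_eq_sum_filter:
  assumes "finite A" and "{t\<in>A. P t} = B"
  shows "(\<Sum>t\<in>A. if P t then f t else 0) = sum f B"
  using sum.inter_filter[OF assms(1), of f P] assms(2) by simp

lemma expectation_one_plus_sum_indicator:
  fixes \<mu> :: "'a pmf" and E :: "'b \<Rightarrow> 'a set"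
  shows "measure_pmf.expectation \<mu> (\<lambda>x. 1 + (\<Sum>t\<in>C. indicator (E t) x))
       = 1 + (\<Sum>t\<in>C. measure_pmf.prob \<mu> (E t))"
proof -
  have "integrable (measure_pmf \<mu>) (indicator A :: 'a \<Rightarrow> real)" for A
    by (rule integrable_real_indicator) (simp_all add: less_top[symmetric])
  then show ?thesis
    by (subst Bochner_Integration.integral_add)
       (auto simp: Bochner_Integration.integral_sum measure_pmf.prob_space)
qed

lemma finite_shift_poset: "finite (shift_poset lam)"
proof (rule finite_subset)
  show "shift_poset lam \<subseteq> Sigma {1..length lam} (\<lambda>t. {t..<t + lampart lam t})"
    unfolding shift_poset_def by auto
qed auto

lemma lampart_Suc_less:
  assumes "strict_partition lam" and "1 \<le> t" and "t \<le> length lam"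
  shows "lampart lam (Suc t) < lampart lam t"
proof (cases "t = length lam")
  case True
  have "lam ! (t - 1) \<in> set lam" and "0 \<notin> set lam"
    using assms unfolding strict_partition_def by simp_all
  then have "lam ! (t - 1) \<noteq> 0" by metis
  then show ?thesis using True assms(2) unfolding lampart_def by simp
next
  case False
  have "sorted_wrt (>) lam" using assms(1) unfolding strict_partition_def by simp
  moreover have "t - 1 < t" and "t < length lam" using False assms(2,3) by simp_all
  ultimately have "lam ! t < lam ! (t - 1)" by (rule sorted_wrt_nth_less)
  then show ?thesis using False assms(2,3) unfolding lampart_def by simp
qed

(* nu t and la t are the lengths of row t of shifted diagrams \<nu> \<subseteq> \<lambda> with len rows; row t
   occupies the columns t .. t + nu t - 1. The box (t, t + nu t) just past the end of row t is
   addable to \<nu> iff it lies in \<lambda> and addable_row t; the last box (t, t + nu t - 1) is removable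
   iff removable_row t. *)
locale row_lengths =
  fixes nu la :: "nat \<Rightarrow> nat" and len :: nat
  assumes la_Suc_less: "\<And>t. 1 \<le> t \<Longrightarrow> t \<le> len \<Longrightarrow> la (Suc t) < la t"
    and la_beyond_len: "\<And>t. len < t \<Longrightarrow> la t = 0"
    and nu_le_la: "\<And>t. nu t \<le> la t"
    and nu_Suc_less: "\<And>t. 1 \<le> t \<Longrightarrow> 0 < nu (Suc t) \<Longrightarrow> nu (Suc t) < nu t"
begin

definition addable_row :: "nat \<Rightarrow> bool" where
  "addable_row t \<longleftrightarrow> t = 1 \<or> nu t + 2 \<le> nu (t - 1)"

definition removable_row :: "nat \<Rightarrow> bool" where
  "removable_row t \<longleftrightarrow> 1 \<le> nu t \<and> (nu t = 1 \<or> nu (Suc t) + 2 \<le> nu t)"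

lemma row_end_le: "1 \<le> t \<Longrightarrow> t \<le> a \<Longrightarrow> a \<le> len \<Longrightarrow> a + la a \<le> t + la t"
  by (rule row_end_antimono) (auto intro: la_Suc_less)

lemma la_pos: "1 \<le> t \<Longrightarrow> t \<le> len \<Longrightarrow> 0 < la t"
  using la_Suc_less[of t] by simp

end

locale rook_rows = row_lengths +
  fixes i j :: nat
  assumes i_pos: "1 \<le> i" and i_le_len: "i \<le> len" and i_le_j: "i \<le> j" and j_less: "j < i + la i"
begin

(* For t \<le> j, misses_j t and reaches_j t are the indicators of (t, j) \<notin> \<nu> and (t, j) \<in> \<nu>; the
   other indicators locate the addable and removable box of row t relative to column j. *)
definition misses_j :: "nat \<Rightarrow> int" where
  "misses_j t = (if t + nu t \<le> j then 1 else 0)"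

definition reaches_j :: "nat \<Rightarrow> int" where
  "reaches_j t = (if 1 \<le> nu t \<and> j \<le> t + nu t - 1 then 1 else 0)"

definition addable_upto_j :: "nat \<Rightarrow> int" where
  "addable_upto_j t = (if nu t < la t \<and> addable_row t \<and> t + nu t \<le> j then 1 else 0)"

definition addable_after_j :: "nat \<Rightarrow> int" where
  "addable_after_j t = (if nu t < la t \<and> addable_row t \<and> j < t + nu t \<and> 0 < nu t then 1 else 0)"

definition removable_before_j :: "nat \<Rightarrow> int" where
  "removable_before_j t = (if removable_row t \<and> t + nu t - 1 < j \<and> 1 < nu t then 1 else 0)"

definition removable_from_j :: "nat \<Rightarrow> int" where
  "removable_from_j t = (if removable_row t \<and> j \<le> t + nu t - 1 then 1 else 0)"

definition corner_filled :: "nat \<Rightarrow> int" where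
  "corner_filled t = (if 1 \<le> t \<and> t \<le> len - 1 \<and> la (Suc t) + 2 \<le> la t
     \<and> i \<le> t \<and> j \<le> t + la (Suc t) \<and> nu (Suc t) = la (Suc t) \<and> la (Suc t) + 2 \<le> nu t
     then 1 else 0)"

lemma j_less_row_end: "1 \<le> k \<Longrightarrow> k \<le> i \<Longrightarrow> j < k + la k"
  using row_end_le[of k i] i_le_len j_less by simp

lemma upper_rows_step:
  assumes "1 \<le> k" and "Suc k \<le> i"
  shows "misses_j k + addable_upto_j (Suc k) - removable_before_j k = misses_j (Suc k)"
proof -
  have "nu (Suc k) = 0 \<or> nu (Suc k) < nu k" using nu_Suc_less[of k] assms by auto
  then show ?thesis
    using assms j_less_row_end[of "Suc k"] i_le_j nu_le_la[of k] nu_le_la[of "Suc k"]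
    unfolding misses_j_def addable_upto_j_def removable_before_j_def addable_row_def removable_row_def
    by (auto split: if_splits)
qed

lemma upper_rows_telescope:
  "1 \<le> k \<Longrightarrow> k \<le> i \<Longrightarrow>
    (\<Sum>t\<in>{1..<Suc k}. addable_upto_j t) - (\<Sum>t\<in>{1..<k}. removable_before_j t) = misses_j k"
proof (induction k rule: dec_induct)
  case base
  then show ?case using j_less_row_end[of 1] i_pos
    unfolding addable_upto_j_def misses_j_def addable_row_def by auto
next
  case (step k)
  then show ?case using upper_rows_step[of k] by simp
qed


lemma lower_rows_step:
  assumes "i \<le> k" and "k \<le> len"
  shows "reaches_j (Suc k) + removable_from_j k - addable_after_j (Suc k) = reaches_j k + corner_filled k"
proof (cases "nu (Suc k) = 0")
  case True
  have "corner_filled k = 0"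
    using la_pos[of "Suc k"] True i_pos assms unfolding corner_filled_def by auto
  with True show ?thesis
    unfolding reaches_j_def removable_from_j_def addable_after_j_def removable_row_def by simp
next
  case False
  then have "nu (Suc k) < nu k" using nu_Suc_less[of k] i_pos assms by simp
  moreover have "Suc k \<le> len" using False nu_le_la[of "Suc k"] la_beyond_len[of "Suc k"] by force
  ultimately show ?thesis
    using False assms i_pos i_le_j nu_le_la[of k] nu_le_la[of "Suc k"]
    unfolding reaches_j_def removable_from_j_def addable_after_j_def corner_filled_def
      removable_row_def addable_row_def
    by (auto split: if_splits)
qed

lemma lower_rows_telescope:
  "k \<le> Suc len \<Longrightarrow> i \<le> k \<Longrightarrow>
    (\<Sum>t\<in>{k..len}. removable_from_j t) - (\<Sum>t\<in>{Suc k..len}. addable_after_j t)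
      = reaches_j k + (\<Sum>t\<in>{k..len}. corner_filled t)"
proof (induction k rule: inc_induct)
  case base
  have "nu (Suc len) = 0" using nu_le_la[of "Suc len"] la_beyond_len[of "Suc len"] by simp
  then show ?case unfolding reaches_j_def by simp
next
  case (step k)
  have "addable_after_j (Suc k) = 0" if "\<not> Suc k \<le> len"
    using that la_beyond_len[of "Suc k"] unfolding addable_after_j_def by simp
  then have "(\<Sum>t\<in>{Suc k..len}. addable_after_j t)
      = addable_after_j (Suc k) + (\<Sum>t\<in>{Suc (Suc k)..len}. addable_after_j t)"
    by (cases "Suc k \<le> len") (simp_all add: sum.atLeast_Suc_atMost)
  with step lower_rows_step[of k] show ?case by (simp add: sum.atLeast_Suc_atMost)
qed

end

locale strict_partition_ideal =
  fixes lam :: "nat list" and I :: "box set"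
  assumes strict: "strict_partition lam" and ideal: "I \<in> order_ideals lam"
begin

lemma ideal_subset: "I \<subseteq> shift_poset lam"
  using ideal unfolding order_ideals_def by auto

lemma ideal_downward: "p \<in> I \<Longrightarrow> q \<in> shift_poset lam \<Longrightarrow> box_le q p \<Longrightarrow> q \<in> I"
  using ideal unfolding order_ideals_def by auto

lemma ideal_row_subset: "{c. (t, c) \<in> I} \<subseteq> {t..<t + lampart lam t}"
  using ideal_subset unfolding shift_poset_def by auto

lemma ideal_row_eq: "{c. (t, c) \<in> I} = {t..<t + ideal_part I t}"
  unfolding ideal_part_def
proof (rule eq_atLeastLessThan_card)
  show "finite {c. (t, c) \<in> I}" using ideal_row_subset finite_subset by blast
  show "t \<le> c" if "c \<in> {c. (t, c) \<in> I}" for c using that ideal_row_subset[of t] by auto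
  show "c' \<in> {c. (t, c) \<in> I}" if "c \<in> {c. (t, c) \<in> I}" "t \<le> c'" "c' \<le> c" for c c'
  proof -
    have "(t, c) \<in> shift_poset lam" using that(1) ideal_subset by auto
    then have "(t, c') \<in> shift_poset lam" using that(2,3) unfolding shift_poset_def by auto
    then show ?thesis using ideal_downward[of "(t, c)"] that unfolding box_le_def by auto
  qed
qed

lemma mem_ideal_iff: "(t, c) \<in> I \<longleftrightarrow> t \<le> c \<and> c < t + ideal_part I t"
  using ideal_row_eq[of t] by auto

lemma ideal_part_le_lampart: "ideal_part I t \<le> lampart lam t"
  unfolding ideal_part_def using card_mono[OF _ ideal_row_subset] by fastforce

lemma ideal_part_Suc_less:
  assumes "1 \<le> t" and "0 < ideal_part I (Suc t)"
  shows "ideal_part I (Suc t) < ideal_part I t"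
proof -
  let ?k = "ideal_part I (Suc t)"
  have last: "(Suc t, t + ?k) \<in> I" using mem_ideal_iff assms by simp
  then have "Suc t \<le> length lam" using ideal_subset unfolding shift_poset_def by auto
  then have "?k < lampart lam t"
    using ideal_part_le_lampart[of "Suc t"] lampart_Suc_less[OF strict assms(1)]
    by (meson le_less_trans Suc_leD)
  then have "(t, t + ?k) \<in> shift_poset lam"
    using assms(1) \<open>Suc t \<le> length lam\<close> unfolding shift_poset_def by simp
  then have "(t, t + ?k) \<in> I" using ideal_downward[OF last] unfolding box_le_def by simp
  then show ?thesis using mem_ideal_iff by simp
qed

end

sublocale strict_partition_ideal \<subseteq> row_lengths "ideal_part I" "lampart lam" "length lam"
proof
  show "lampart lam (Suc t) < lampart lam t" if "1 \<le> t" and "t \<le> length lam" for t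
    using lampart_Suc_less[OF strict that] .
  show "lampart lam t = 0" if "length lam < t" for t
    using that unfolding lampart_def by simp
qed (fact ideal_part_le_lampart, fact ideal_part_Suc_less)

context strict_partition_ideal
begin

lemma addable_if_minimal_nonmember:
  assumes box: "(t, c) \<in> shift_poset lam" and out: "(t, c) \<notin> I"
    and minimal: "\<And>q. q \<in> shift_poset lam - I \<Longrightarrow> box_le q (t, c) \<Longrightarrow> q = (t, c)"
  shows "c = t + ideal_part I t \<and> addable_row t"
proof
  have "t \<le> c" and "c < t + lampart lam t" and "1 \<le> t" and "t \<le> length lam"
    using box unfolding shift_poset_def by auto
  have "t + ideal_part I t \<le> c" using out mem_ideal_iff[of t c] \<open>t \<le> c\<close> by auto
  show c_eq: "c = t + ideal_part I t"
  proof (rule ccontr)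
    assume "c \<noteq> t + ideal_part I t"
    then have "(t, c - 1) \<in> shift_poset lam - I" and "box_le (t, c - 1) (t, c)"
      using box \<open>t + ideal_part I t \<le> c\<close> mem_ideal_iff[of t "c - 1"]
      unfolding shift_poset_def box_le_def by auto
    then have "(t, c - 1) = (t, c)" using minimal by blast
    then show False using \<open>1 \<le> t\<close> \<open>t \<le> c\<close> by simp
  qed
  show "addable_row t"
  proof (rule ccontr)
    assume not_addable: "\<not> addable_row t"
    then have "2 \<le> t" using \<open>1 \<le> t\<close> unfolding addable_row_def by simp
    then have "lampart lam t < lampart lam (t - 1)"
      using la_Suc_less[of "t - 1"] \<open>t \<le> length lam\<close> by simp
    then have "(t - 1, c) \<in> shift_poset lam - I" and "box_le (t - 1, c) (t, c)"
      using \<open>2 \<le> t\<close> \<open>t \<le> length lam\<close> \<open>t \<le> c\<close> \<open>c < t + lampart lam t\<close> not_addable c_eq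
        mem_ideal_iff[of "t - 1" c]
      unfolding shift_poset_def box_le_def addable_row_def by auto
    then have "(t - 1, c) = (t, c)" using minimal by blast
    then show False using \<open>2 \<le> t\<close> by simp
  qed
qed

lemma minimal_nonmember_if_addable:
  assumes c_eq: "c = t + ideal_part I t" and addable: "addable_row t"
    and q: "q \<in> shift_poset lam - I" and le: "box_le q (t, c)"
  shows "q = (t, c)"
proof -
  obtain a b where q_eq: "q = (a, b)" by (cases q)
  have "1 \<le> a" and "a \<le> b" and "a \<le> t" and "b \<le> c"
    using q le unfolding q_eq shift_poset_def box_le_def by auto
  show ?thesis
  proof (cases "a = t")
    case True
    then show ?thesis using q \<open>a \<le> b\<close> \<open>b \<le> c\<close> c_eq mem_ideal_iff[of t b] unfolding q_eq by auto
  next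
    case False
    then have "2 \<le> t" and long: "ideal_part I t + 2 \<le> ideal_part I (t - 1)"
      using \<open>a \<le> t\<close> \<open>1 \<le> a\<close> addable unfolding addable_row_def by auto
    \<comment> \<open>the row above reaches past column c, so it dominates q\<close>
    have "b < t - 1 + ideal_part I (t - 1)" and "t - 1 < t - 1 + ideal_part I (t - 1)"
      using long c_eq \<open>b \<le> c\<close> \<open>2 \<le> t\<close> by linarith+
    then have "(t - 1, max b (t - 1)) \<in> I" using mem_ideal_iff by simp
    moreover have "box_le (a, b) (t - 1, max b (t - 1))"
      using \<open>a \<le> t\<close> False unfolding box_le_def by auto
    ultimately have "q \<in> I" using ideal_downward q unfolding q_eq by blast
    with q show ?thesis by simp
  qed
qed

lemma toggle_plus_eq:
  assumes "(t, c) \<in> shift_poset lam"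
  shows "toggle_plus lam (t, c) I = (if c = t + ideal_part I t \<and> addable_row t then 1 else 0)"
proof -
  have "(t, c) \<notin> I \<and> (\<forall>q\<in>shift_poset lam - I. box_le q (t, c) \<longrightarrow> q = (t, c))
      \<longleftrightarrow> c = t + ideal_part I t \<and> addable_row t"
  proof
    assume "c = t + ideal_part I t \<and> addable_row t"
    then show "(t, c) \<notin> I \<and> (\<forall>q\<in>shift_poset lam - I. box_le q (t, c) \<longrightarrow> q = (t, c))"
      using mem_ideal_iff[of t c] minimal_nonmember_if_addable by auto
  qed (use addable_if_minimal_nonmember[OF assms] in blast)
  then show ?thesis using assms unfolding toggle_plus_def by simp
qed

lemma removable_if_maximal_member:
  assumes box: "(t, c) \<in> shift_poset lam" and member: "(t, c) \<in> I"
    and maximal: "\<And>q. q \<in> I \<Longrightarrow> box_le (t, c) q \<Longrightarrow> q = (t, c)"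
  shows "c = t + ideal_part I t - 1 \<and> removable_row t"
proof
  have "1 \<le> t" and "t \<le> c" using box unfolding shift_poset_def by auto
  have "c < t + ideal_part I t" using member mem_ideal_iff by simp
  show c_eq: "c = t + ideal_part I t - 1"
  proof (rule ccontr)
    assume "c \<noteq> t + ideal_part I t - 1"
    then have "(t, c + 1) \<in> I" and "box_le (t, c) (t, c + 1)"
      using \<open>c < t + ideal_part I t\<close> \<open>t \<le> c\<close> mem_ideal_iff unfolding box_le_def by auto
    then show False using maximal by fastforce
  qed
  show "removable_row t"
  proof (rule ccontr)
    assume not_removable: "\<not> removable_row t"
    then have "0 < ideal_part I (Suc t)"
      using \<open>c < t + ideal_part I t\<close> \<open>t \<le> c\<close> unfolding removable_row_def by auto
    then have "ideal_part I (Suc t) = ideal_part I t - 1"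
      using nu_Suc_less[OF \<open>1 \<le> t\<close>] not_removable unfolding removable_row_def by auto
    then have "(Suc t, c) \<in> I" and "box_le (t, c) (Suc t, c)"
      using c_eq not_removable \<open>c < t + ideal_part I t\<close> \<open>t \<le> c\<close> mem_ideal_iff
      unfolding removable_row_def box_le_def by auto
    then show False using maximal by fastforce
  qed
qed

lemma maximal_member_if_removable:
  assumes c_eq: "c = t + ideal_part I t - 1" and removable: "removable_row t"
    and q: "q \<in> I" and le: "box_le (t, c) q"
  shows "q = (t, c)"
proof -
  obtain a b where q_eq: "q = (a, b)" by (cases q)
  have "(a, b) \<in> shift_poset lam" using q ideal_subset unfolding q_eq by auto
  then have "a \<le> b" and "a \<le> length lam" and "b < a + lampart lam a"
    unfolding shift_poset_def by auto
  have "t \<le> a" and "c \<le> b" using le unfolding q_eq box_le_def by auto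
  have "(t, c) \<in> I" using c_eq removable mem_ideal_iff unfolding removable_row_def by auto
  then have "1 \<le> t" using ideal_subset unfolding shift_poset_def by auto
  show ?thesis
  proof (cases "a = t")
    case True
    then show ?thesis using q c_eq \<open>c \<le> b\<close> mem_ideal_iff unfolding q_eq by auto
  next
    case False
    then have "Suc t \<le> a" using \<open>t \<le> a\<close> by simp
    then have "a + lampart lam a \<le> Suc t + lampart lam (Suc t)"
      using row_end_le[of "Suc t" a] \<open>a \<le> length lam\<close> by simp
    then have "(Suc t, b) \<in> shift_poset lam"
      using \<open>Suc t \<le> a\<close> \<open>a \<le> b\<close> \<open>a \<le> length lam\<close> \<open>b < a + lampart lam a\<close>
      unfolding shift_poset_def by auto
    moreover have "box_le (Suc t, b) (a, b)" using \<open>Suc t \<le> a\<close> unfolding box_le_def by simp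
    ultimately have "(Suc t, b) \<in> I" using ideal_downward q unfolding q_eq by blast
    then have "Suc t \<le> b" and "b < Suc t + ideal_part I (Suc t)" using mem_ideal_iff by simp_all
    then have "ideal_part I (Suc t) = ideal_part I t - 1"
      using nu_Suc_less[of t] c_eq \<open>c \<le> b\<close> \<open>1 \<le> t\<close> by fastforce
    then show ?thesis
      using removable \<open>b < Suc t + ideal_part I (Suc t)\<close> \<open>Suc t \<le> b\<close> unfolding removable_row_def by auto
  qed
qed

lemma toggle_minus_eq:
  assumes "(t, c) \<in> shift_poset lam"
  shows "toggle_minus lam (t, c) I = (if c = t + ideal_part I t - 1 \<and> removable_row t then 1 else 0)"
proof -
  have "(t, c) \<in> I \<and> (\<forall>q\<in>I. box_le (t, c) q \<longrightarrow> q = (t, c))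
      \<longleftrightarrow> c = t + ideal_part I t - 1 \<and> removable_row t"
  proof
    assume "c = t + ideal_part I t - 1 \<and> removable_row t"
    then show "(t, c) \<in> I \<and> (\<forall>q\<in>I. box_le (t, c) q \<longrightarrow> q = (t, c))"
      using assms mem_ideal_iff[of t c] maximal_member_if_removable
      unfolding removable_row_def shift_poset_def by auto
  qed (use removable_if_maximal_member[OF assms] in blast)
  then show ?thesis using assms unfolding toggle_minus_def by simp
qed

lemma sum_toggle_plus_rows:
  "(\<Sum>p\<in>{p\<in>shift_poset lam. R p}. toggle_plus lam p I)
   = (\<Sum>t\<in>{1..length lam}. if ideal_part I t < lampart lam t \<and> addable_row t
        \<and> R (t, t + ideal_part I t) then 1 else 0)"
proof -
  have "(\<Sum>p\<in>{p\<in>shift_poset lam. R p}. toggle_plus lam p I)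
      = (\<Sum>p\<in>{p\<in>shift_poset lam. R p}.
          if snd p = fst p + ideal_part I (fst p) \<and> addable_row (fst p) then 1 else 0)"
    by (rule sum.cong) (auto simp: toggle_plus_eq)
  also have "\<dots> = (\<Sum>t\<in>{1..length lam}.
      if (t, t + ideal_part I t) \<in> {p\<in>shift_poset lam. R p} \<and> addable_row t then 1 else 0)"
    by (rule sum_graph_indicator) (simp_all add: finite_shift_poset, auto simp: shift_poset_def)
  also have "\<dots> = (\<Sum>t\<in>{1..length lam}. if ideal_part I t < lampart lam t \<and> addable_row t
        \<and> R (t, t + ideal_part I t) then 1 else 0)"
    by (rule sum.cong) (auto simp: shift_poset_def)
  finally show ?thesis .
qed

lemma sum_toggle_minus_rows:
  "(\<Sum>p\<in>{p\<in>shift_poset lam. R p}. toggle_minus lam p I)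
   = (\<Sum>t\<in>{1..length lam}. if removable_row t \<and> R (t, t + ideal_part I t - 1) then 1 else 0)"
proof -
  have "(\<Sum>p\<in>{p\<in>shift_poset lam. R p}. toggle_minus lam p I)
      = (\<Sum>p\<in>{p\<in>shift_poset lam. R p}.
          if snd p = fst p + ideal_part I (fst p) - 1 \<and> removable_row (fst p) then 1 else 0)"
    by (rule sum.cong) (auto simp: toggle_minus_eq)
  also have "\<dots> = (\<Sum>t\<in>{1..length lam}.
      if (t, t + ideal_part I t - 1) \<in> {p\<in>shift_poset lam. R p} \<and> removable_row t then 1 else 0)"
    by (rule sum_graph_indicator) (simp_all add: finite_shift_poset, auto simp: shift_poset_def)
  also have "\<dots> = (\<Sum>t\<in>{1..length lam}. if removable_row t \<and> R (t, t + ideal_part I t - 1) then 1 else 0)"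
  proof (rule sum.cong)
    fix t assume "t \<in> {1..length lam}"
    then show "(if (t, t + ideal_part I t - 1) \<in> {p\<in>shift_poset lam. R p} \<and> removable_row t then 1 else 0)
        = (if removable_row t \<and> R (t, t + ideal_part I t - 1) then 1 else 0 :: int)"
      using nu_le_la[of t] unfolding removable_row_def shift_poset_def by auto
  qed simp
  finally show ?thesis .
qed

lemma shift_rook_eq_corner_count:
  assumes box: "(i, j) \<in> shift_poset lam"
  shows "shift_rook lam i j I = 1 + (\<Sum>t\<in>shift_corners_ij lam i j. if corner_in lam t I then 1 else 0)"
proof -
  interpret rook_rows "ideal_part I" "lampart lam" "length lam" i j
    by unfold_locales (use box in \<open>auto simp: shift_poset_def\<close>)
  have upper_plus: "(\<Sum>p\<in>{p\<in>shift_poset lam. fst p \<le> i \<and> snd p \<le> j}. toggle_plus lam p I)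
      = (\<Sum>t\<in>{1..<Suc i}. addable_upto_j t)"
    unfolding sum_toggle_plus_rows
    by (rule trans[OF sum.cong sum_if_eq_sum_filter[where P = "\<lambda>t. t \<le> i"]])
       (use i_le_len in \<open>auto simp: addable_upto_j_def\<close>)
  have upper_minus: "(\<Sum>p\<in>{p\<in>shift_poset lam. fst p < i \<and> snd p < j \<and> fst p < snd p}. toggle_minus lam p I)
      = (\<Sum>t\<in>{1..<i}. removable_before_j t)"
    unfolding sum_toggle_minus_rows
    by (rule trans[OF sum.cong sum_if_eq_sum_filter[where P = "\<lambda>t. t < i"]])
       (use i_le_len in \<open>auto simp: removable_before_j_def\<close>)
  have lower_minus: "(\<Sum>p\<in>{p\<in>shift_poset lam. i \<le> fst p \<and> j \<le> snd p}. toggle_minus lam p I)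
      = (\<Sum>t\<in>{i..length lam}. removable_from_j t)"
    unfolding sum_toggle_minus_rows
    by (rule trans[OF sum.cong sum_if_eq_sum_filter[where P = "\<lambda>t. i \<le> t"]])
       (use i_pos in \<open>auto simp: removable_from_j_def\<close>)
  have lower_plus: "(\<Sum>p\<in>{p\<in>shift_poset lam. i < fst p \<and> j < snd p \<and> fst p < snd p}. toggle_plus lam p I)
      = (\<Sum>t\<in>{Suc i..length lam}. addable_after_j t)"
    unfolding sum_toggle_plus_rows
    by (rule trans[OF sum.cong sum_if_eq_sum_filter[where P = "\<lambda>t. i < t"]])
       (auto simp: addable_after_j_def)
  have corners: "(\<Sum>t\<in>shift_corners_ij lam i j. if corner_in lam t I then 1 else 0)
      = (\<Sum>t\<in>{i..length lam}. corner_filled t)"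
    by (rule sum.mono_neutral_cong_left)
       (auto simp: shift_corners_ij_def shift_corners_def corner_in_def corner_filled_def)
  have "misses_j i + reaches_j i = 1"
    using i_le_j unfolding misses_j_def reaches_j_def by auto
  then show ?thesis
    unfolding shift_rook_def upper_plus upper_minus lower_minus lower_plus corners
    using upper_rows_telescope[OF i_pos order.refl] lower_rows_telescope[of i] i_le_len
    by simp
qed

end

theorem lemma5p4:
  fixes lam :: "nat list" and \<mu> :: "box set pmf" and i j :: nat
  assumes "strict_partition lam"
    and "set_pmf \<mu> \<subseteq> order_ideals lam"
    and "(i, j) \<in> shift_poset lam"
  shows "measure_pmf.expectation \<mu> (\<lambda>I. real_of_int (shift_rook lam i j I))
       = 1 + (\<Sum>t\<in>shift_corners_ij lam i j. measure_pmf.prob \<mu> {I. corner_in lam t I})"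
proof -
  have "real_of_int (shift_rook lam i j I)
      = 1 + (\<Sum>t\<in>shift_corners_ij lam i j. indicator {I. corner_in lam t I} I)"
    if "I \<in> set_pmf \<mu>" for I
  proof -
    interpret strict_partition_ideal lam I
      using assms(1,2) that by unfold_locales auto
    show ?thesis
      by (auto simp: shift_rook_eq_corner_count[OF assms(3)] of_int_sum indicator_def intro!: sum.cong)
  qed
  then have "measure_pmf.expectation \<mu> (\<lambda>I. real_of_int (shift_rook lam i j I))
      = measure_pmf.expectation \<mu> (\<lambda>I. 1 + (\<Sum>t\<in>shift_corners_ij lam i j. indicator {I. corner_in lam t I} I))"
    by (intro integral_cong_AE) (auto simp: AE_measure_pmf_iff)
  then show ?thesis by (simp only: expectation_one_plus_sum_indicator)
qed

end
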